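(* Let $H_n = \sum_{j=1}^n \frac{1}{j}$ denote the $n$th harmonic number and $\zeta$ the Riemann zeta function. Then $$\sum_{n = 1}^\infty H_{2n}\left(\zeta(2) - 1 - \frac{1}{2^2} - \ldots - \frac{1}{n^2} - \frac{1}{n} \right) = \log(2) - \frac{7}{8}\zeta(3) - 1.$$ *)

theory Defs
  imports "HOL-Analysis.Analysis"
begin

definition zeta_real :: "real \<Rightarrow> real" where
  "zeta_real s = (\<Sum>k. 1 / (real (Suc k)) powr s)"

end

theory Submission
  imports Defs "HOL-Real_Asymp.Real_Asymp"
begin

(* Since 1/n = sum_{k>=n} 1/(k(k+1)), the bracket equals -r_n with r_n = sum_{k>=n} 1/(k(k+1)^2) > 0.
   Everything is then nonnegative, so summation by parts is legitimate:
   sum_n H_{2n} r_n = sum_k A_k/(k(k+1)^2) with A_k = sum_{n<=k} H_{2n} = (k+1/2) H_{2k} + H_k/4 - k.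
   Partial fractions and H_{2k} = O_k + H_k/2, where O_k = sum_{j<k} 1/(2j+1), reduce this to the series
   sum H_k/(k(k+1)) and sum O_k/(k(k+1)), which are summed by parts once more against the telescoping
   tails of 1/(k(k+1)), and sum H_k/(k+1)^2 and sum O_k/(k+1)^2.
   The latter two come from Tornheim's double series T = sum_{m,n>=1} 1/(mn(m+n)): summing it by rows
   and by antidiagonals gives T = sum H_m/m^2 = 2 sum H_k/(k+1)^2, whence T = 2 zeta(3); splitting T
   according to the parities of m and n gives sum O_k/k^2 = 7/4 zeta(3). *)

section \<open>Rearranging series\<close>

lemma has_sum_Sigma_nonneg_iff:
  fixes f :: "'a \<times> 'b \<Rightarrow> real"
  assumes nonneg: "\<And>x y. x \<in> A \<Longrightarrow> y \<in> B x \<Longrightarrow> f (x, y) \<ge> 0"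
    and fibres: "\<And>x. x \<in> A \<Longrightarrow> ((\<lambda>y. f (x, y)) has_sum g x) (B x)"
  shows "(f has_sum S) (Sigma A B) \<longleftrightarrow> (g has_sum S) A"
proof
  assume "(f has_sum S) (Sigma A B)"
  then show "(g has_sum S) A"
    using fibres by (rule has_sum_SigmaD)
next
  assume g: "(g has_sum S) A"
  have "f summable_on Sigma A B"
    using fibres g nonneg by (intro summable_on_SigmaI) (auto dest: has_sum_imp_summable)
  then show "(f has_sum S) (Sigma A B)"
    using fibres g by (intro has_sum_SigmaI)
qed

lemma has_sum_antidiagonal_nonneg_iff:
  fixes f :: "nat \<times> nat \<Rightarrow> real"
  assumes "\<And>x. f x \<ge> 0"
  shows "(f has_sum S) UNIV \<longleftrightarrow> ((\<lambda>w. \<Sum>m\<le>w. f (m, w - m)) has_sum S) UNIV"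
proof -
  have bij: "bij_betw (\<lambda>(w, m). (m, w - m)) (Sigma UNIV atMost) (UNIV :: (nat \<times> nat) set)"
    by (rule bij_betw_byWitness[where f' = "\<lambda>(m, n). (m + n, m)"]) (auto simp: image_def)
  have "(f has_sum S) UNIV \<longleftrightarrow> ((\<lambda>(w, m). f (m, w - m)) has_sum S) (Sigma UNIV atMost)"
    using has_sum_reindex_bij_betw[OF bij, of f S] by (simp add: case_prod_unfold)
  also have "\<dots> \<longleftrightarrow> ((\<lambda>w. \<Sum>m\<le>w. f (m, w - m)) has_sum S) UNIV"
    using assms by (intro has_sum_Sigma_nonneg_iff) auto
  finally show ?thesis .
qed

lemma sums_iff_has_sum_nonneg:
  fixes f :: "nat \<Rightarrow> real"
  assumes "\<And>n. f n \<ge> 0"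
  shows "f sums S \<longleftrightarrow> (f has_sum S) UNIV"
  using assms sums_nonneg_imp_has_sum has_sum_imp_sums by blast

lemma summation_by_parts_nonneg:
  fixes u v t :: "nat \<Rightarrow> real"
  assumes u: "\<And>j. u j \<ge> 0" and v: "\<And>k. v k \<ge> 0"
    and tails: "\<And>j. (\<lambda>d. v (j + d)) sums t j"
  shows "(\<lambda>j. u j * t j) sums S \<longleftrightarrow> (\<lambda>k. (\<Sum>j\<le>k. u j) * v k) sums S"
proof -
  define f where "f = (\<lambda>(j, d). u j * v (j + d))"
  have f_nonneg: "f x \<ge> 0" for x
    using u v by (auto simp: f_def split: prod.splits)
  have t: "t j \<ge> 0" for j
    using sums_le[OF _ sums_zero tails] v by simp
  have rows: "((\<lambda>d. f (j, d)) has_sum u j * t j) UNIV" for j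
    using has_sum_cmult_right[OF sums_nonneg_imp_has_sum[OF tails v], of "u j"]
    by (simp add: f_def)
  have "(\<lambda>j. u j * t j) sums S \<longleftrightarrow> ((\<lambda>j. u j * t j) has_sum S) UNIV"
    using u t by (intro sums_iff_has_sum_nonneg) simp
  also have "\<dots> \<longleftrightarrow> (f has_sum S) UNIV"
    using has_sum_Sigma_nonneg_iff[of UNIV "\<lambda>_. UNIV" f, OF _ rows] f_nonneg by simp
  also have "\<dots> \<longleftrightarrow> ((\<lambda>k. (\<Sum>j\<le>k. u j) * v k) has_sum S) UNIV"
    using f_nonneg by (simp add: has_sum_antidiagonal_nonneg_iff f_def sum_distrib_right)
  also have "\<dots> \<longleftrightarrow> (\<lambda>k. (\<Sum>j\<le>k. u j) * v k) sums S"
    using u v by (intro sums_iff_has_sum_nonneg[symmetric]) (simp add: sum_nonneg)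
  finally show ?thesis .
qed

lemma has_sum_parity_split:
  fixes f :: "nat \<times> nat \<Rightarrow> 'a::topological_comm_monoid_add"
  assumes "((\<lambda>(a, b). f (2 * a, 2 * b)) has_sum s00) UNIV"
    and "((\<lambda>(a, b). f (2 * a, 2 * b + 1)) has_sum s01) UNIV"
    and "((\<lambda>(a, b). f (2 * a + 1, 2 * b)) has_sum s10) UNIV"
    and "((\<lambda>(a, b). f (2 * a + 1, 2 * b + 1)) has_sum s11) UNIV"
  shows "(f has_sum s00 + s01 + s10 + s11) UNIV"
proof -
  define part :: "nat \<times> nat \<Rightarrow> (nat \<times> nat) set"
    where "part = (\<lambda>(i, j). range (\<lambda>(a, b). (2 * a + i, 2 * b + j)))"
  define s where "s = (\<lambda>(i, j). [[s00, s01], [s10, s11]] ! i ! j)"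
  have part_eq: "part ij = {x. (fst x mod 2, snd x mod 2) = ij}"
    if "ij \<in> {..<2} \<times> {..<2}" for ij
  proof (intro set_eqI iffI)
    fix x assume "x \<in> {x. (fst x mod 2, snd x mod 2) = ij}"
    then have "x = (\<lambda>(a, b). (2 * a + fst ij, 2 * b + snd ij)) (fst x div 2, snd x div 2)"
      by (auto simp: prod_eq_iff; presburger)
    then show "x \<in> part ij"
      unfolding part_def case_prod_beta' by (rule image_eqI) simp
  qed (use that in \<open>auto simp: part_def\<close>)
  have "(f has_sum s ij) (part ij)" if "ij \<in> {..<2} \<times> {..<2}" for ij
  proof -
    obtain i j where ij: "ij = (i, j)" "i < 2" "j < 2"
      using \<open>ij \<in> {..<2} \<times> {..<2}\<close> by blast
    have "inj (\<lambda>(a, b). (2 * a + i, 2 * b + j))"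
      by (auto simp: inj_def)
    moreover have "((\<lambda>(a, b). f (2 * a + i, 2 * b + j)) has_sum s (i, j)) UNIV"
      using ij(2,3) assms by (auto simp: s_def less_2_cases_iff)
    ultimately show ?thesis
      by (simp add: part_def ij has_sum_reindex comp_def case_prod_beta')
  qed
  then have "(f has_sum (\<Sum>ij\<in>{..<2} \<times> {..<2}. s ij)) (\<Union>ij\<in>{..<2} \<times> {..<2}. part ij)"
    by (intro sum_has_sum) (auto simp: part_eq)
  moreover have "(\<Union>ij\<in>{..<2} \<times> {..<2}. part ij) = UNIV"
    by (auto simp: part_eq)
  moreover have "(\<Sum>ij\<in>{..<2} \<times> {..<2}. s ij) = s00 + s01 + s10 + s11"
    by (simp add: s_def lessThan_Suc numeral_2_eq_2 add_ac)
  ultimately show ?thesis by simp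
qed

lemma telescope_sums_gap:
  fixes g :: "nat \<Rightarrow> 'a::real_normed_vector"
  assumes "g \<longlonglongrightarrow> 0"
  shows "(\<lambda>n. g n - g (n + k)) sums (\<Sum>i<k. g i)"
proof -
  have "(\<lambda>n. \<Sum>i<k. g (n + i) - g (Suc (n + i))) sums (\<Sum>i<k. g i)"
  proof (rule sums_sum)
    fix i
    have "(\<lambda>n. g (n + i)) \<longlonglongrightarrow> 0"
      using LIMSEQ_ignore_initial_segment[OF assms, of i] by simp
    from telescope_sums'[OF this] show "(\<lambda>n. g (n + i) - g (Suc (n + i))) sums g i"
      by simp
  qed
  moreover have "(\<Sum>i<k. g (n + i) - g (Suc (n + i))) = g n - g (n + k)" for n
    using sum_lessThan_telescope'[of "\<lambda>i. g (n + i)" k] by simp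
  ultimately show ?thesis by simp
qed

lemma sum_atMost_add_reflect:
  fixes f :: "nat \<Rightarrow> 'a::comm_semiring_1"
  shows "(\<Sum>m\<le>w. f m + f (w - m)) = 2 * (\<Sum>m\<le>w. f m)"
  using sum.atLeastAtMost_rev[of f 0 w] by (simp add: sum.distrib atLeast0AtMost mult_2)

section \<open>Harmonic numbers and Tornheim's double series\<close>

lemma zeta_real_sums:
  assumes "n \<ge> 2"
  shows "(\<lambda>k. 1 / (real k + 1) ^ n) sums zeta_real (real n)"
proof -
  have "summable (\<lambda>k. inverse (real k ^ n))"
    using assms by (rule inverse_power_summable)
  then have "summable (\<lambda>k. 1 / (real k + 1) ^ n)"
    by (subst (asm) summable_Suc_iff[symmetric]) (simp add: divide_inverse add.commute)
  moreover have "zeta_real (real n) = (\<Sum>k. 1 / (real k + 1) ^ n)"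
    by (simp add: zeta_real_def powr_realpow add.commute)
  ultimately show ?thesis
    by (simp add: summable_sums)
qed

lemma zeta_real_tail_sums:
  assumes "n \<ge> 2"
  shows "(\<lambda>k. 1 / (real k + 2) ^ n) sums (zeta_real (real n) - 1)"
  using sums_Suc_iff[of "\<lambda>k. 1 / (real k + 1) ^ n"] zeta_real_sums[OF assms]
  by (simp add: add_ac)

lemma ln_2_sums: "(\<lambda>k. 1 / (2 * real k + 1) - 1 / (2 * real k + 2)) sums ln 2"
  using alternating_harmonic_series_sums' by (simp add: inverse_eq_divide add_ac)

definition odd_harm :: "nat \<Rightarrow> real" where
  "odd_harm n = (\<Sum>k<n. 1 / (2 * real k + 1))"

lemma harm_double: "harm (2 * n) = odd_harm n + harm n / (2 :: real)"
proof (induction n)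
  case (Suc n)
  have "2 * Suc n = Suc (Suc (2 * n))" by simp
  with Suc show ?case
    by (simp add: harm_Suc odd_harm_def field_simps)
qed (simp add: odd_harm_def harm_def)

lemma odd_harm_nonneg: "odd_harm n \<ge> 0"
  by (simp add: odd_harm_def sum_nonneg)

lemma odd_harm_le_harm: "odd_harm n \<le> harm n"
  unfolding odd_harm_def harm_altdef inverse_eq_divide
  by (intro sum_mono) (simp add: frac_le)

(* Tornheim's double series sum_{m,n>=1} 1/(mn(m+n)), with both indices shifted down by one. *)
definition tornheim :: "nat \<times> nat \<Rightarrow> real" where
  "tornheim = (\<lambda>(m, n). 1 / ((real m + 1) * (real n + 1) * (real m + real n + 2)))"

lemma tornheim_nonneg: "tornheim x \<ge> 0"
  by (simp add: tornheim_def split: prod.splits)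

lemma tornheim_commute: "tornheim (m, n) = tornheim (n, m)"
  by (simp add: tornheim_def algebra_simps)

lemma tornheim_eq_row_partial_fraction:
  "tornheim (m, n) = (1 / (real n + 1) - 1 / (real m + real n + 2)) / (real m + 1) ^ 2"
proof -
  have "real m + 1 \<noteq> 0" "real n + 1 \<noteq> 0" "real m + real n + 2 \<noteq> 0" by linarith+
  then show ?thesis
    by (simp add: tornheim_def divide_simps) (simp add: algebra_simps power2_eq_square)
qed

lemma tornheim_eq_antidiagonal_partial_fraction:
  "tornheim (m, n) = (1 / (real m + 1) + 1 / (real n + 1)) / (real m + real n + 2) ^ 2"
proof -
  have "real m + 1 \<noteq> 0" "real n + 1 \<noteq> 0" "real m + real n + 2 \<noteq> 0" by linarith+
  then show ?thesis
    by (simp add: tornheim_def divide_simps) (simp add: algebra_simps power2_eq_square)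
qed

lemma tornheim_row_sums: "(\<lambda>n. tornheim (m, n)) sums (harm (Suc m) / (real m + 1) ^ 2)"
proof -
  have "(\<lambda>n. 1 / (real n + 1)) \<longlonglongrightarrow> 0" by real_asymp
  from sums_divide[OF telescope_sums_gap[OF this, of "Suc m"], of "(real m + 1) ^ 2"]
  show ?thesis
    by (simp add: tornheim_eq_row_partial_fraction harm_altdef inverse_eq_divide add_ac)
qed

lemma tornheim_antidiagonal: "(\<Sum>m\<le>w. tornheim (m, w - m)) = 2 * harm (Suc w) / (real w + 2) ^ 2"
proof -
  have "tornheim (m, w - m) = (1 / (real m + 1) + 1 / (real (w - m) + 1)) / (real w + 2) ^ 2"
    if "m \<le> w" for m
    using that by (simp add: tornheim_eq_antidiagonal_partial_fraction flip: of_nat_add)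
  then have "(\<Sum>m\<le>w. tornheim (m, w - m)) =
      (\<Sum>m\<le>w. 1 / (real m + 1) + 1 / (real (w - m) + 1)) / (real w + 2) ^ 2"
    by (simp add: sum_divide_distrib)
  also have "\<dots> = 2 * (\<Sum>m\<le>w. 1 / (real m + 1)) / (real w + 2) ^ 2"
    by (simp only: sum_atMost_add_reflect[of "\<lambda>m. 1 / (real m + 1)"])
  also have "(\<Sum>m\<le>w. 1 / (real m + 1)) = harm (Suc w)"
    by (simp add: harm_altdef lessThan_Suc_atMost inverse_eq_divide add.commute)
  finally show ?thesis .
qed

lemma consecutive_product_tail_sums:
  "(\<lambda>d. 1 / ((real (j + d) + 1) * (real (j + d) + 2))) sums (1 / (real j + 1))"
proof -
  have "(\<lambda>d. 1 / (real (j + d) + 1)) \<longlonglongrightarrow> 0" by real_asymp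
  from telescope_sums'[OF this] show ?thesis
    by (simp add: field_simps)
qed

lemma partial_sums_div_consecutive_product_sums:
  fixes u :: "nat \<Rightarrow> real"
  assumes "\<And>j. u j \<ge> 0" and "(\<lambda>j. u j / (real j + 1)) sums S"
  shows "(\<lambda>k. (\<Sum>j\<le>k. u j) / ((real k + 1) * (real k + 2))) sums S"
  using summation_by_parts_nonneg[where v = "\<lambda>k. 1 / ((real k + 1) * (real k + 2))",
      OF assms(1) _ consecutive_product_tail_sums] assms(2)
  by simp

lemma harm_div_consecutive_product_sums:
  "(\<lambda>k. harm (Suc k) / ((real k + 1) * (real k + 2))) sums zeta_real 2"
proof -
  have "(\<lambda>j. 1 / (real j + 1) / (real j + 1)) sums zeta_real 2"
    using zeta_real_sums[of 2] by (simp add: power2_eq_square)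
  from partial_sums_div_consecutive_product_sums[OF _ this] show ?thesis
    by (simp add: harm_altdef lessThan_Suc_atMost inverse_eq_divide add.commute)
qed

lemma odd_harm_div_consecutive_product_sums:
  "(\<lambda>k. odd_harm (Suc k) / ((real k + 1) * (real k + 2))) sums (2 * ln 2)"
proof -
  have "1 / (2 * real j + 1) / (real j + 1) = 2 * (1 / (2 * real j + 1) - 1 / (2 * real j + 2))" for j
    by (simp add: field_split_simps)
  then have "(\<lambda>j. 1 / (2 * real j + 1) / (real j + 1)) sums (2 * ln 2)"
    using sums_mult[OF ln_2_sums, of 2] by simp
  from partial_sums_div_consecutive_product_sums[OF _ this] show ?thesis
    by (simp add: odd_harm_def lessThan_Suc_atMost)
qed

lemma tornheim_has_sum_iff_rows:
  "(tornheim has_sum S) UNIV \<longleftrightarrow> (\<lambda>m. harm (Suc m) / (real m + 1) ^ 2) sums S"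
proof -
  have "((\<lambda>n. tornheim (m, n)) has_sum harm (Suc m) / (real m + 1) ^ 2) UNIV" for m
    using tornheim_row_sums tornheim_nonneg by (rule sums_nonneg_imp_has_sum)
  then have "(tornheim has_sum S) UNIV \<longleftrightarrow> ((\<lambda>m. harm (Suc m) / (real m + 1) ^ 2) has_sum S) UNIV"
    using has_sum_Sigma_nonneg_iff[of UNIV "\<lambda>_. UNIV" tornheim] tornheim_nonneg by simp
  also have "\<dots> \<longleftrightarrow> (\<lambda>m. harm (Suc m) / (real m + 1) ^ 2) sums S"
    by (intro sums_iff_has_sum_nonneg[symmetric]) (simp add: harm_nonneg)
  finally show ?thesis .
qed

lemma tornheim_has_sum_iff_antidiagonals:
  "(tornheim has_sum S) UNIV \<longleftrightarrow> (\<lambda>w. 2 * harm (Suc w) / (real w + 2) ^ 2) sums S"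
  using has_sum_antidiagonal_nonneg_iff[OF tornheim_nonneg]
    sums_iff_has_sum_nonneg[of "\<lambda>w. 2 * harm (Suc w) / (real w + 2) ^ 2"]
  by (simp add: tornheim_antidiagonal harm_nonneg)

lemma harm_div_Suc_square_sums: "(\<lambda>k. harm (Suc k) / (real k + 2) ^ 2) sums zeta_real 3"
proof -
  have "summable (\<lambda>k. harm (Suc k) / (real k + 2) ^ 2)"
  proof (rule summable_comparison_test')
    show "summable (\<lambda>k. harm (Suc k) / ((real k + 1) * (real k + 2)))"
      using harm_div_consecutive_product_sums by (rule sums_summable)
    show "norm (harm (Suc k) / (real k + 2) ^ 2) \<le> harm (Suc k) / ((real k + 1) * (real k + 2))" for k
      by (simp add: harm_nonneg frac_le power2_eq_square)
  qed
  then obtain s where s: "(\<lambda>k. harm (Suc k) / (real k + 2) ^ 2) sums s"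
    by (auto simp: summable_def)
  then have "(tornheim has_sum 2 * s) UNIV"
    unfolding tornheim_has_sum_iff_antidiagonals by (auto dest: sums_mult[of _ _ 2])
  then have rows: "(\<lambda>m. harm (Suc m) / (real m + 1) ^ 2) sums (2 * s)"
    by (simp add: tornheim_has_sum_iff_rows)
  have "harm (Suc (Suc k)) / (real (Suc k) + 1) ^ 2 =
      harm (Suc k) / (real k + 2) ^ 2 + 1 / (real k + 2) ^ 3" for k
  proof -
    have "harm (Suc (Suc k)) = harm (Suc k) + 1 / (real k + 2)"
      by (simp add: harm_Suc[of "Suc k"] inverse_eq_divide add_ac)
    then show ?thesis
      by (simp add: add_divide_distrib power3_eq_cube power2_eq_square add_ac)
  qed
  then have "(\<lambda>k. harm (Suc (Suc k)) / (real (Suc k) + 1) ^ 2) sums (s + (zeta_real 3 - 1))"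
    using sums_add[OF s zeta_real_tail_sums[of 3]] by simp
  moreover have "(\<lambda>k. harm (Suc (Suc k)) / (real (Suc k) + 1) ^ 2) sums (2 * s - 1)"
    using rows sums_Suc_iff[of "\<lambda>m. harm (Suc m) / (real m + 1) ^ 2"] by (simp add: harm_def)
  ultimately have "s = zeta_real 3"
    using sums_unique2 by fastforce
  with s show ?thesis by simp
qed

lemma tornheim_has_sum: "(tornheim has_sum 2 * zeta_real 3) UNIV"
  using sums_mult[OF harm_div_Suc_square_sums, of 2] by (simp add: tornheim_has_sum_iff_antidiagonals)

lemma harm_div_square_sums: "(\<lambda>k. harm (Suc k) / (real k + 1) ^ 2) sums (2 * zeta_real 3)"
  using tornheim_has_sum by (simp add: tornheim_has_sum_iff_rows)

lemma tornheim_odd_odd: "tornheim (2 * a + 1, 2 * b + 1) = tornheim (a, b) / 8"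
proof -
  have "real a + 1 \<noteq> 0" "real b + 1 \<noteq> 0" "real a + real b + 2 \<noteq> 0" by linarith+
  then show ?thesis
    by (simp add: tornheim_def divide_simps) (simp add: algebra_simps)
qed

lemma tornheim_even_even_antidiagonal:
  "(\<Sum>a\<le>w. tornheim (2 * a, 2 * (w - a))) = 2 * odd_harm (Suc w) / (2 * real w + 2) ^ 2"
proof -
  have "tornheim (2 * a, 2 * (w - a)) =
      (1 / (2 * real a + 1) + 1 / (2 * real (w - a) + 1)) / (2 * real w + 2) ^ 2" if "a \<le> w" for a
    using that by (simp add: tornheim_eq_antidiagonal_partial_fraction flip: of_nat_add)
  then have "(\<Sum>a\<le>w. tornheim (2 * a, 2 * (w - a))) =
      (\<Sum>a\<le>w. 1 / (2 * real a + 1) + 1 / (2 * real (w - a) + 1)) / (2 * real w + 2) ^ 2"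
    by (simp add: sum_divide_distrib)
  also have "\<dots> = 2 * (\<Sum>a\<le>w. 1 / (2 * real a + 1)) / (2 * real w + 2) ^ 2"
    by (simp only: sum_atMost_add_reflect[of "\<lambda>a. 1 / (2 * real a + 1)"])
  also have "(\<Sum>a\<le>w. 1 / (2 * real a + 1)) = odd_harm (Suc w)"
    by (simp add: odd_harm_def lessThan_Suc_atMost)
  finally show ?thesis .
qed

lemma tornheim_odd_even_row_sums:
  "(\<lambda>b. tornheim (2 * a + 1, 2 * b)) sums (odd_harm (Suc a) / (4 * (real a + 1) ^ 2))"
proof -
  have "(\<lambda>b. 1 / (2 * real b + 1)) \<longlonglongrightarrow> 0" by real_asymp
  from sums_divide[OF telescope_sums_gap[OF this, of "Suc a"], of "(2 * real a + 2) ^ 2"]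
  show ?thesis
    by (simp add: tornheim_eq_row_partial_fraction odd_harm_def power2_eq_square field_simps)
qed

lemma tornheim_even_even_has_sum:
  assumes "(\<lambda>k. odd_harm (Suc k) / (real k + 1) ^ 2) sums E"
  shows "((\<lambda>(a, b). tornheim (2 * a, 2 * b)) has_sum E / 2) UNIV"
proof -
  have "(2 * real w + 2) ^ 2 = 4 * (real w + 1) ^ 2" for w
    by (simp add: power2_eq_square algebra_simps)
  then have "(\<lambda>w. 2 * odd_harm (Suc w) / (2 * real w + 2) ^ 2) sums (E / 2)"
    using sums_divide[OF assms, of 2] by (simp add: mult.commute)
  then have "((\<lambda>w. 2 * odd_harm (Suc w) / (2 * real w + 2) ^ 2) has_sum E / 2) UNIV"
    by (rule sums_nonneg_imp_has_sum) (simp add: odd_harm_nonneg)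
  then show ?thesis
    by (subst has_sum_antidiagonal_nonneg_iff)
      (simp_all add: tornheim_nonneg tornheim_even_even_antidiagonal split: prod.splits)
qed

lemma tornheim_odd_even_has_sum:
  assumes "(\<lambda>k. odd_harm (Suc k) / (real k + 1) ^ 2) sums E"
  shows "((\<lambda>(a, b). tornheim (2 * a + 1, 2 * b)) has_sum E / 4) UNIV"
proof -
  have rows: "((\<lambda>b. tornheim (2 * a + 1, 2 * b))
      has_sum odd_harm (Suc a) / (4 * (real a + 1) ^ 2)) UNIV" for a
    using tornheim_odd_even_row_sums tornheim_nonneg by (rule sums_nonneg_imp_has_sum)
  have "(\<lambda>a. odd_harm (Suc a) / (4 * (real a + 1) ^ 2)) sums (E / 4)"
    using sums_divide[OF assms, of 4] by (simp add: mult.commute)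
  then have "((\<lambda>a. odd_harm (Suc a) / (4 * (real a + 1) ^ 2)) has_sum E / 4) UNIV"
    by (rule sums_nonneg_imp_has_sum) (simp add: odd_harm_nonneg)
  then show ?thesis
    using has_sum_Sigma_nonneg_iff[where A = UNIV and B = "\<lambda>_. UNIV"
        and f = "\<lambda>(a, b). tornheim (2 * a + 1, 2 * b)"
        and g = "\<lambda>a. odd_harm (Suc a) / (4 * (real a + 1) ^ 2)"] rows
    by (simp add: tornheim_nonneg)
qed

lemma odd_harm_div_square_sums: "(\<lambda>k. odd_harm (Suc k) / (real k + 1) ^ 2) sums (7 / 4 * zeta_real 3)"
proof -
  have "summable (\<lambda>k. odd_harm (Suc k) / (real k + 1) ^ 2)"
    using harm_div_square_sums
    by (rule summable_comparison_test'[OF sums_summable])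
       (simp add: odd_harm_nonneg odd_harm_le_harm divide_right_mono)
  then obtain E where E: "(\<lambda>k. odd_harm (Suc k) / (real k + 1) ^ 2) sums E"
    by (auto simp: summable_def)
  have "(tornheim has_sum E / 2 + E / 4 + E / 4 + 2 * zeta_real 3 / 8) UNIV"
  proof (rule has_sum_parity_split)
    show "((\<lambda>(a, b). tornheim (2 * a, 2 * b)) has_sum E / 2) UNIV"
      using E by (rule tornheim_even_even_has_sum)
    show odd_even: "((\<lambda>(a, b). tornheim (2 * a + 1, 2 * b)) has_sum E / 4) UNIV"
      using E by (rule tornheim_odd_even_has_sum)
    have "(\<lambda>(a, b). tornheim (2 * a, 2 * b + 1)) =
        (\<lambda>(a, b). tornheim (2 * a + 1, 2 * b)) \<circ> prod.swap"
      by (auto simp: fun_eq_iff intro: tornheim_commute)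
    then show "((\<lambda>(a, b). tornheim (2 * a, 2 * b + 1)) has_sum E / 4) UNIV"
      using odd_even has_sum_reindex[of prod.swap UNIV "\<lambda>(a, b). tornheim (2 * a + 1, 2 * b)"]
      by simp
    show "((\<lambda>(a, b). tornheim (2 * a + 1, 2 * b + 1)) has_sum 2 * zeta_real 3 / 8) UNIV"
      unfolding tornheim_odd_odd using has_sum_cmult_right[OF tornheim_has_sum, of "1 / 8"]
      by (simp add: case_prod_beta')
  qed
  with tornheim_has_sum have "E = 7 / 4 * zeta_real 3"
    using has_sum_unique by fastforce
  with E show ?thesis by simp
qed

lemma odd_harm_div_Suc_square_sums:
  "(\<lambda>k. odd_harm (Suc k) / (real k + 2) ^ 2) sums (7 / 4 * zeta_real 3 - 4 * ln 2 + zeta_real 2)"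
proof -
  have shifted: "(\<lambda>k. odd_harm (Suc (Suc k)) / (real k + 2) ^ 2) sums (7 / 4 * zeta_real 3 - 1)"
    using sums_Suc_iff[of "\<lambda>k. odd_harm (Suc k) / (real k + 1) ^ 2"] odd_harm_div_square_sums
    by (simp add: odd_harm_def add_ac)
  have ln_2_tail: "(\<lambda>k. 1 / (2 * real k + 3) - 1 / (2 * real k + 4)) sums (ln 2 - 1 / 2)"
    using sums_Suc_iff[of "\<lambda>k. 1 / (2 * real k + 1) - 1 / (2 * real k + 2)"] ln_2_sums
    by (simp add: algebra_simps)
  have correction: "(\<lambda>k. 4 * (1 / (2 * real k + 3) - 1 / (2 * real k + 4)) - 1 / (real k + 2) ^ 2)
      sums (4 * (ln 2 - 1 / 2) - (zeta_real 2 - 1))"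
    using sums_diff[OF sums_mult[OF ln_2_tail, of 4] zeta_real_tail_sums[of 2]] by simp
  have "odd_harm (Suc (Suc k)) / (real k + 2) ^ 2
      - (4 * (1 / (2 * real k + 3) - 1 / (2 * real k + 4)) - 1 / (real k + 2) ^ 2)
      = odd_harm (Suc k) / (real k + 2) ^ 2" for k
  proof -
    have odd_harm_Suc: "odd_harm (Suc (Suc k)) = odd_harm (Suc k) + 1 / (2 * real k + 3)"
      by (simp add: odd_harm_def add_ac)
    have "2 * real k + 3 \<noteq> 0" "2 * real k + 4 \<noteq> 0" "real k + 2 \<noteq> 0" by linarith+
    then show ?thesis
      unfolding odd_harm_Suc by (simp add: divide_simps) (simp add: algebra_simps power2_eq_square)
  qed
  then show ?thesis
    using sums_diff[OF shifted correction] by (simp add: algebra_simps)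
qed

section \<open>Series with even-indexed harmonic numbers\<close>

lemma harm_double_div_consecutive_product_sums:
  "(\<lambda>k. harm (2 * Suc k) / ((real k + 1) * (real k + 2))) sums (2 * ln 2 + zeta_real 2 / 2)"
proof -
  have "harm (2 * Suc k) / ((real k + 1) * (real k + 2)) =
      odd_harm (Suc k) / ((real k + 1) * (real k + 2))
      + harm (Suc k) / ((real k + 1) * (real k + 2)) / 2" for k
    by (simp only: harm_double) (simp add: add_divide_distrib)
  then show ?thesis
    using sums_add[OF odd_harm_div_consecutive_product_sums
        sums_divide[OF harm_div_consecutive_product_sums, of 2]]
    by (simp only:)
qed

lemma harm_double_div_Suc_square_sums:
  "(\<lambda>k. harm (2 * Suc k) / (real k + 2) ^ 2) sums (9 / 4 * zeta_real 3 - 4 * ln 2 + zeta_real 2)"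
proof -
  have "harm (2 * Suc k) / (real k + 2) ^ 2 =
      odd_harm (Suc k) / (real k + 2) ^ 2 + harm (Suc k) / (real k + 2) ^ 2 / 2" for k
    by (simp only: harm_double) (simp add: add_divide_distrib)
  then show ?thesis
    using sums_add[OF odd_harm_div_Suc_square_sums sums_divide[OF harm_div_Suc_square_sums, of 2]]
    by (simp add: algebra_simps)
qed

lemma sum_harm_double:
  "(\<Sum>j<k. harm (2 * Suc j)) = (real k + 1 / 2) * harm (2 * k) + harm k / 4 - (real k :: real)"
proof (induction k)
  case (Suc k)
  have harm_double_Suc:
    "harm (2 * Suc k) = harm (2 * k) + 1 / (2 * real k + 1) + (1 / (2 * real k + 2) :: real)"
    by (simp add: harm_Suc inverse_eq_divide add_ac)
  have harm_Suc': "harm (Suc k) = harm k + 1 / (real k + 1 :: real)"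
    by (simp add: harm_Suc inverse_eq_divide add_ac)
  have "2 * real k + 1 \<noteq> 0" "2 * real k + 2 \<noteq> 0" "real k + 1 \<noteq> 0" by linarith+
  then show ?case
    unfolding sum.lessThan_Suc Suc.IH harm_double_Suc harm_Suc'
    by (simp add: divide_simps) (simp add: algebra_simps)
qed (simp add: harm_def)

lemma partial_sums_harm_double_sums:
  "(\<lambda>k. (\<Sum>j\<le>k. harm (2 * Suc j)) / ((real k + 1) * (real k + 2) ^ 2))
     sums (1 + 7 / 8 * zeta_real 3 - ln 2)"
proof -
  have partial_fractions: "((x + 3 / 2) * a + b / 4 - (x + 1)) / ((x + 1) * (x + 2) ^ 2) =
      a / ((x + 1) * (x + 2)) / 2 + a / (x + 2) ^ 2 / 2 + b / ((x + 1) * (x + 2)) / 4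
      - b / (x + 2) ^ 2 / 4 - 1 / (x + 2) ^ 2" if "x \<ge> 0" for x a b :: real
  proof -
    have "x + 1 \<noteq> 0" "x + 2 \<noteq> 0" using that by linarith+
    then show ?thesis
      by (simp add: divide_simps) (simp add: algebra_simps power2_eq_square)
  qed
  have decomposition: "(\<Sum>j\<le>k. harm (2 * Suc j)) / ((real k + 1) * (real k + 2) ^ 2) =
      harm (2 * Suc k) / ((real k + 1) * (real k + 2)) / 2 + harm (2 * Suc k) / (real k + 2) ^ 2 / 2
      + harm (Suc k) / ((real k + 1) * (real k + 2)) / 4 - harm (Suc k) / (real k + 2) ^ 2 / 4
      - 1 / (real k + 2) ^ 2" for k
  proof -
    have "(\<Sum>j\<le>k. harm (2 * Suc j)) =
        (real k + 3 / 2) * harm (2 * Suc k) + harm (Suc k) / 4 - (real k + 1)"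
      using sum_harm_double[of "Suc k"] by (simp add: lessThan_Suc_atMost)
    then show ?thesis
      using partial_fractions[of "real k" "harm (2 * Suc k)" "harm (Suc k)"] by simp
  qed
  have "(\<lambda>k. harm (2 * Suc k) / ((real k + 1) * (real k + 2)) / 2 + harm (2 * Suc k) / (real k + 2) ^ 2 / 2
      + harm (Suc k) / ((real k + 1) * (real k + 2)) / 4 - harm (Suc k) / (real k + 2) ^ 2 / 4
      - 1 / (real k + 2) ^ 2)
    sums ((2 * ln 2 + zeta_real 2 / 2) / 2 + (9 / 4 * zeta_real 3 - 4 * ln 2 + zeta_real 2) / 2
      + zeta_real 2 / 4 - zeta_real 3 / 4 - (zeta_real 2 - 1))"
    using zeta_real_tail_sums[of 2]
    by (intro sums_diff sums_add sums_divide harm_double_div_consecutive_product_sums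
        harm_double_div_Suc_square_sums harm_div_consecutive_product_sums harm_div_Suc_square_sums) simp_all
  also have "(2 * ln 2 + zeta_real 2 / 2) / 2 + (9 / 4 * zeta_real 3 - 4 * ln 2 + zeta_real 2) / 2
      + zeta_real 2 / 4 - zeta_real 3 / 4 - (zeta_real 2 - 1) = 1 + 7 / 8 * zeta_real 3 - ln 2"
    by (simp add: field_simps)
  finally show ?thesis
    by (simp only: decomposition)
qed

lemma zeta_real_2_remainder_sums:
  "(\<lambda>d. 1 / ((real (j + d) + 1) * (real (j + d) + 2) ^ 2))
     sums (1 / real (Suc j) - (zeta_real 2 - (\<Sum>k=1..Suc j. 1 / real k ^ 2)))"
proof -
  have "(\<lambda>d. 1 / (real (d + Suc j) + 1) ^ 2) sums (zeta_real 2 - (\<Sum>i<Suc j. 1 / (real i + 1) ^ 2))"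
    using zeta_real_sums[of 2] sums_iff_shift[of "\<lambda>i. 1 / (real i + 1) ^ 2" "Suc j"] by simp
  moreover have "(\<Sum>i<Suc j. 1 / (real i + 1) ^ 2) = (\<Sum>k=1..Suc j. 1 / real k ^ 2)"
    by (simp add: sum.atLeast1_atMost_eq add.commute)
  ultimately have "(\<lambda>d. 1 / (real (j + d) + 2) ^ 2) sums (zeta_real 2 - (\<Sum>k=1..Suc j. 1 / real k ^ 2))"
    by (simp add: add_ac)
  from sums_diff[OF consecutive_product_tail_sums[of j] this]
  have "(\<lambda>d. 1 / ((real (j + d) + 1) * (real (j + d) + 2)) - 1 / (real (j + d) + 2) ^ 2)
      sums (1 / real (Suc j) - (zeta_real 2 - (\<Sum>k=1..Suc j. 1 / real k ^ 2)))"
    by (simp add: add.commute)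
  moreover have "1 / ((x + 1) * (x + 2)) - 1 / (x + 2) ^ 2 = 1 / ((x + 1) * (x + 2) ^ 2)"
    if "x \<ge> 0" for x :: real
  proof -
    have "x + 1 \<noteq> 0" "x + 2 \<noteq> 0" using that by linarith+
    then show ?thesis by (simp add: divide_simps) (simp add: algebra_simps power2_eq_square)
  qed
  ultimately show ?thesis by simp
qed

theorem mainTheorem1:
  shows "(\<lambda>m. let n = Suc m in
            harm (2 * n) * (zeta_real 2 - (\<Sum>k=1..n. 1 / (real k)^2) - 1 / real n))
         sums (ln 2 - 7 / 8 * zeta_real 3 - 1)"
proof -
  define remainder where
    "remainder j = 1 / real (Suc j) - (zeta_real 2 - (\<Sum>k=1..Suc j. 1 / real k ^ 2))" for j
  have "(\<lambda>j. harm (2 * Suc j) * remainder j) sums (1 + 7 / 8 * zeta_real 3 - ln 2)"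
    using summation_by_parts_nonneg[where v = "\<lambda>k. 1 / ((real k + 1) * (real k + 2) ^ 2)",
        OF harm_nonneg _ zeta_real_2_remainder_sums[folded remainder_def]]
      partial_sums_harm_double_sums
    by simp
  from sums_minus[OF this] show ?thesis
    by (simp add: remainder_def Let_def algebra_simps)
qed

end
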